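(* Let $a,b,c\in\mathbb C$ satisfy $b^2=ac+1$ or $b^2=ac-1$. In the field of rational functions $\mathbb C(x_1,\ldots,x_n)$, define for $1\le i,j\le n$ $$f[x_ix_j]=\frac{x_i-x_j}{c+b(x_i+x_j)+a\,x_ix_j}.$$ Then for every even $n$, $$f[x_1x_2\ldots x_n]=\prod_{1\le i<j\le n}\frac{x_i-x_j}{c+b(x_i+x_j)+a\,x_ix_j}.$$ Special cases include $\frac{x-y}{1-xy}$ (take $a=-1$, $b=0$, $c=1$) and $\frac{x-y}{c+x+y}$ for any constant $c$ (take $a=0$, $b=1$).
   Context: Here $f[x_1\ldots x_n]$ denotes the Pfaffian $$f[x_1\ldots x_n]=\sum s(x_1\ldots x_n,y_1\ldots y_n)\,f[y_1y_2]\cdots f[y_{n-1}y_n],$$ where the sum is over all partitions of $\{x_1,\ldots,x_n\}$ into pairs $\{y_1,y_2\},\ldots,\{y_{n-1},y_n\}$. The sign $s(x_1\ldots x_n,y_1\ldots y_n)$ is the sign of the permutation taking $x_1\ldots x_n$ to $y_1\ldots y_n$, and each summand is independent of how the pairing is listed. The denominators are nonzero polynomials, since $(a,b,c)\neq(0,0,0)$. *)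

theory Defs
  imports Complex_Main "HOL-Combinatorics.Permutations"
begin

text \<open>Pfaffian of the pairing function F on the index set {0..<n}:
  sum over all partitions of {0..<n} into pairs. Each pairing is listed
  canonically as y_0 y_1, y_2 y_3, ... with y_(2k) < y_(2k+1) and
  y_0 < y_2 < y_4 < ...; writing y_k = sigma k, the sign is sign sigma.\<close>

definition canonical_pairing :: "nat \<Rightarrow> (nat \<Rightarrow> nat) \<Rightarrow> bool" where
  "canonical_pairing n \<sigma> \<longleftrightarrow>
     \<sigma> permutes {0..<n} \<and>
     (\<forall>k. 2*k+1 < n \<longrightarrow> \<sigma> (2*k) < \<sigma> (2*k+1)) \<and>
     (\<forall>k. 2*k+2 < n \<longrightarrow> \<sigma> (2*k) < \<sigma> (2*k+2))"

definition pfaffian :: "nat \<Rightarrow> (nat \<Rightarrow> nat \<Rightarrow> 'a::comm_ring_1) \<Rightarrow> 'a" where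
  "pfaffian n F = (\<Sum>\<sigma> | canonical_pairing n \<sigma>.
      of_int (sign \<sigma>) * (\<Prod>k<n div 2. F (\<sigma> (2*k)) (\<sigma> (2*k+1))))"

end

(* The proof is by induction on n, expanding the Pfaffian along its first row. Write
   Q(u, v) = c + b(u + v) + auv, f(u, v) = (u - v) / Q(u, v), t = x_0 and y_l = x_(l+1).
   By the induction hypothesis every minor in the expansion is a product, so the claim becomes
   L(t) = R(t) with L(t) = sum_p (-1)^p f(t, y_p) D_p and R(t) = prod_l f(t, y_l) C, where D_p and
   C are products over pairs of the y_l.  Multiplied by prod_l Q(t, y_l), L - R becomes a polynomial
   in t of degree at most m + 1.  It vanishes at t = y_0, since a Pfaffian with two equal rows
   vanishes and f(y_0, y_0) = 0, and at the zero r_k of Q(-, y_k) for every k: there only the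
   k-th term of L survives, and the identity
     Q(r, z) Q(y, z) = Q(r, y) Q(z, z) + (b^2 - ac)(r - z)(y - z)
   together with (b^2 - ac)^m = 1 turns that term into R(r_k).  For generic points these m + 2
   zeros are distinct, so the polynomial is zero.  Genericity is removed by moving x_i to
   x_i + s(i + 1): both sides are continuous in s and agree for all small s <> 0. *)

theory Submission
  imports Defs "HOL-Library.Disjoint_Sets" "HOL-Computational_Algebra.Polynomial"
begin

section \<open>Expansion of the Pfaffian along the first row\<close>

definition skip :: "nat \<Rightarrow> nat \<Rightarrow> nat" where
  "skip p i = (if i < p then i else Suc i)"

definition unskip :: "nat \<Rightarrow> nat \<Rightarrow> nat" where
  "unskip p v = (if v < p then v else v - 1)"

lemma skip_less_iff [simp]: "skip p i < skip p j \<longleftrightarrow> i < j"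
  by (simp add: skip_def)

lemma unskip_skip [simp]: "unskip p (skip p i) = i"
  by (simp add: skip_def unskip_def)

lemma skip_0 [simp]: "skip 0 = Suc"
  by (simp add: skip_def fun_eq_iff)

definition rotate_to_second :: "nat \<Rightarrow> nat \<Rightarrow> nat" where
  "rotate_to_second p k = (if k = 1 then Suc p else if 2 \<le> k \<and> k \<le> Suc p then k - 1 else k)"

lemma rotate_to_second_permutes:
  assumes "p < N"
  shows "rotate_to_second p permutes {0..<Suc N} \<and> sign (rotate_to_second p) = (-1)^p"
  using assms
proof (induction p)
  case 0
  have "rotate_to_second 0 = id" by (auto simp: rotate_to_second_def fun_eq_iff)
  then show ?case using permutes_id[of "{0..<Suc N}"] by (simp add: id_def)
next
  case (Suc p)
  have step:
    "rotate_to_second (Suc p) = Transposition.transpose (Suc p) (Suc (Suc p)) \<circ> rotate_to_second p"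
    by (auto simp: rotate_to_second_def fun_eq_iff Transposition.transpose_def)
  have tr: "Transposition.transpose (Suc p) (Suc (Suc p)) permutes {0..<Suc N}"
    using Suc.prems by (intro permutes_swap_id) auto
  from Suc have IH: "rotate_to_second p permutes {0..<Suc N}" "sign (rotate_to_second p) = (-1)^p"
    by simp_all
  have "sign (rotate_to_second (Suc p)) =
      sign (Transposition.transpose (Suc p) (Suc (Suc p))) * sign (rotate_to_second p)"
    unfolding step
    by (intro sign_compose permutes_imp_permutation[OF _ tr] permutes_imp_permutation[OF _ IH(1)])
      simp_all
  then show ?case
    using IH permutes_compose[OF IH(1) tr] by (simp add: step sign_swap_id del: comp_apply)
qed

definition pair_with_first :: "nat \<Rightarrow> nat \<Rightarrow> (nat \<Rightarrow> nat) \<Rightarrow> nat \<Rightarrow> nat" where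
  "pair_with_first m p \<tau> = rotate_to_second p \<circ> map_permutation {0..<m} (\<lambda>k. k + 2) \<tau>"

lemma pair_with_first_permutes:
  assumes "p \<le> m" "\<tau> permutes {0..<m}"
  shows "pair_with_first m p \<tau> permutes {0..<Suc (Suc m)}"
    and "sign (pair_with_first m p \<tau>) = (-1)^p * sign \<tau>"
proof -
  have bij: "bij_betw (\<lambda>k. k + 2) {0..<m} {2..<Suc (Suc m)}"
    by (rule bij_betwI[where g = "\<lambda>k. k - 2"]) auto
  have sh: "map_permutation {0..<m} (\<lambda>k. k + 2) \<tau> permutes {0..<Suc (Suc m)}"
    using permutes_subset[OF map_permutation_permutes[OF bij assms(2)]] by auto
  have rot: "rotate_to_second p permutes {0..<Suc (Suc m)}" "sign (rotate_to_second p) = (-1)^p"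
    using rotate_to_second_permutes[of p "Suc m"] assms(1) by auto
  show "pair_with_first m p \<tau> permutes {0..<Suc (Suc m)}"
    unfolding pair_with_first_def using permutes_compose[OF sh rot(1)] .
  have "sign (map_permutation {0..<m} (\<lambda>k. k + 2) \<tau>) = sign \<tau>"
    using assms(2) by (intro sign_map_permutation) (auto simp: inj_on_def)
  then show "sign (pair_with_first m p \<tau>) = (-1)^p * sign \<tau>"
    unfolding pair_with_first_def
    by (subst sign_compose) (use rot sh permutes_imp_permutation in auto)
qed

lemma pair_with_first_0 [simp]: "pair_with_first m p \<tau> 0 = 0"
  and pair_with_first_1 [simp]: "pair_with_first m p \<tau> (Suc 0) = Suc p"
  by (simp_all add: pair_with_first_def rotate_to_second_def map_permutation_def restrict_id_def
      image_iff)

lemma pair_with_first_Suc_Suc [simp]: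
  "k < m \<Longrightarrow> pair_with_first m p \<tau> (Suc (Suc k)) = Suc (skip p (\<tau> k))"
  using map_permutation_apply[of "\<lambda>k. k + 2" "{0..<m}" k \<tau>]
  by (auto simp: pair_with_first_def rotate_to_second_def skip_def inj_on_def)

lemma canonical_pairing_permutes: "canonical_pairing n \<sigma> \<Longrightarrow> \<sigma> permutes {0..<n}"
  by (simp add: canonical_pairing_def)

lemma canonical_pairing_0:
  assumes "canonical_pairing n \<sigma>" "0 < n"
  shows "\<sigma> 0 = 0"
proof -
  have even_le: "\<sigma> 0 \<le> \<sigma> (2*k)" if "2*k < n" for k
    using that
  proof (induction k)
    case (Suc k)
    then show ?case using assms(1) by (force simp: canonical_pairing_def)
  qed simp
  have "\<sigma> 0 \<le> \<sigma> v" if "v < n" for v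
  proof (cases "even v")
    case True
    then show ?thesis using even_le that by auto
  next
    case False
    then obtain k where "v = 2*k+1" using oddE by blast
    then show ?thesis
      using even_le[of k] that assms(1) by (force simp: canonical_pairing_def)
  qed
  moreover have "0 \<in> \<sigma> ` {0..<n}"
    using permutes_image[OF canonical_pairing_permutes[OF assms(1)]] assms(2) by simp
  then obtain v where "v < n" "\<sigma> v = 0" by auto
  ultimately show ?thesis by fastforce
qed

lemma canonical_pairing_pair_with_first_iff:
  assumes "p \<le> m" "\<tau> permutes {0..<m}"
  shows "canonical_pairing (Suc (Suc m)) (pair_with_first m p \<tau>) \<longleftrightarrow> canonical_pairing m \<tau>"
proof -
  let ?\<sigma> = "pair_with_first m p \<tau>"
  have shift: "?\<sigma> (2*Suc k + d) = Suc (skip p (\<tau> (2*k + d)))" if "2*k + d < m" for k d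
    using that by (simp add: numeral_2_eq_2)
  have pairs: "?\<sigma> (2*Suc k) < ?\<sigma> (2*Suc k + 1) \<longleftrightarrow> \<tau> (2*k) < \<tau> (2*k + 1)" if "2*k + 1 < m" for k
    using that shift[of k 0] shift[of k 1] by simp
  have firsts: "?\<sigma> (2*Suc k) < ?\<sigma> (2*Suc k + 2) \<longleftrightarrow> \<tau> (2*k) < \<tau> (2*k + 2)" if "2*k + 2 < m" for k
    using that shift[of k 0] shift[of k 2] by simp
  have start: "?\<sigma> 0 < ?\<sigma> 1" "0 < m \<Longrightarrow> ?\<sigma> 0 < ?\<sigma> 2"
    by (simp_all add: numeral_2_eq_2)
  show ?thesis
  proof
    assume \<sigma>: "canonical_pairing (Suc (Suc m)) ?\<sigma>"
    have "\<tau> (2*k) < \<tau> (2*k+1)" if "2*k+1 < m" for k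
      using \<sigma> that unfolding canonical_pairing_def pairs[OF that, symmetric]
      by (elim conjE allE[of _ "Suc k"]) simp
    moreover have "\<tau> (2*k) < \<tau> (2*k+2)" if "2*k+2 < m" for k
      using \<sigma> that unfolding canonical_pairing_def firsts[OF that, symmetric]
      by (elim conjE allE[of _ "Suc k"]) simp
    ultimately show "canonical_pairing m \<tau>"
      using assms(2) by (simp add: canonical_pairing_def)
  next
    assume \<tau>: "canonical_pairing m \<tau>"
    have "?\<sigma> (2*k) < ?\<sigma> (2*k+1)" if "2*k+1 < m+2" for k
      using that start pairs \<tau> by (cases k) (auto simp: canonical_pairing_def)
    moreover have "?\<sigma> (2*k) < ?\<sigma> (2*k+2)" if "2*k+2 < m+2" for k
      using that start firsts \<tau> by (cases k) (auto simp: canonical_pairing_def)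
    ultimately show "canonical_pairing (Suc (Suc m)) ?\<sigma>"
      using pair_with_first_permutes(1)[OF assms] by (simp add: canonical_pairing_def)
  qed
qed

definition drop_first_pair :: "nat \<Rightarrow> (nat \<Rightarrow> nat) \<Rightarrow> nat \<Rightarrow> nat" where
  "drop_first_pair m \<sigma> k = (if k < m then unskip (\<sigma> 1 - 1) (\<sigma> (Suc (Suc k)) - 1) else k)"

lemma drop_first_pair_pair_with_first:
  assumes "\<tau> permutes {0..<m}"
  shows "drop_first_pair m (pair_with_first m p \<tau>) = \<tau>"
  using assms by (auto simp: fun_eq_iff drop_first_pair_def permutes_not_in)

lemma canonical_pairing_Suc_Suc_values:
  assumes \<sigma>: "canonical_pairing (Suc (Suc m)) \<sigma>"
  defines "p \<equiv> \<sigma> 1 - 1" and "\<tau> \<equiv> drop_first_pair m \<sigma>"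
  shows "\<sigma> 0 = 0" "\<sigma> 1 = Suc p" "p \<le> m"
    and "k < m \<Longrightarrow> \<sigma> (Suc (Suc k)) = Suc (skip p (\<tau> k))" "k < m \<Longrightarrow> \<tau> k < m"
proof -
  have perm: "\<sigma> permutes {0..<Suc (Suc m)}" using \<sigma> by (rule canonical_pairing_permutes)
  have inj: "\<sigma> u = \<sigma> v \<longleftrightarrow> u = v" for u v
    using permutes_inj[OF perm] by (simp add: inj_eq)
  have range: "v < m+2 \<Longrightarrow> \<sigma> v < m+2" for v
    using permutes_in_image[OF perm] by simp
  show \<sigma>0: "\<sigma> 0 = 0" using canonical_pairing_0[OF \<sigma>] by simp
  show \<sigma>1: "\<sigma> 1 = Suc p"
    using inj[of 1 0] \<sigma>0 unfolding p_def by simp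
  then show "p \<le> m" using range[of 1] by simp
  assume "k < m"
  define v where "v = \<sigma> (Suc (Suc k)) - 1"
  have "\<sigma> (Suc (Suc k)) \<noteq> 0" "\<sigma> (Suc (Suc k)) \<noteq> Suc p" "\<sigma> (Suc (Suc k)) < m+2"
    using inj[of "Suc (Suc k)" 0] inj[of "Suc (Suc k)" 1] range[of "Suc (Suc k)"] \<open>k < m\<close> \<sigma>0 \<sigma>1
    by auto
  then have "\<sigma> (Suc (Suc k)) = Suc v" "v \<noteq> p" "v \<le> m" unfolding v_def by auto
  moreover have "\<tau> k = unskip p v"
    using \<open>k < m\<close> by (simp add: \<tau>_def drop_first_pair_def p_def v_def)
  ultimately show "\<sigma> (Suc (Suc k)) = Suc (skip p (\<tau> k))" "\<tau> k < m"
    using \<open>p \<le> m\<close> by (auto simp: skip_def unskip_def)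
qed

lemma canonical_pairing_decompose:
  assumes \<sigma>: "canonical_pairing (Suc (Suc m)) \<sigma>"
  defines "p \<equiv> \<sigma> 1 - 1" and "\<tau> \<equiv> drop_first_pair m \<sigma>"
  shows "p \<le> m" "canonical_pairing m \<tau>" "pair_with_first m p \<tau> = \<sigma>"
proof -
  note parts = canonical_pairing_Suc_Suc_values[OF \<sigma>, folded p_def \<tau>_def]
  have perm: "\<sigma> permutes {0..<Suc (Suc m)}" using \<sigma> by (rule canonical_pairing_permutes)
  show "p \<le> m" by (rule parts(3))
  have "\<tau> permutes {0..<m}"
  proof (rule bij_imp_permutes)
    have "inj_on \<tau> {0..<m}"
    proof (rule inj_onI)
      fix k l assume "k \<in> {0..<m}" "l \<in> {0..<m}" "\<tau> k = \<tau> l"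
      then have "\<sigma> (Suc (Suc k)) = \<sigma> (Suc (Suc l))" using parts(4)[of k] parts(4)[of l] by simp
      then show "k = l" using permutes_inj[OF perm] by (simp add: inj_eq)
    qed
    moreover have "\<tau> ` {0..<m} \<subseteq> {0..<m}" using parts(5) by auto
    ultimately show "bij_betw \<tau> {0..<m} {0..<m}"
      by (simp add: bij_betw_def endo_inj_surj)
  qed (simp add: \<tau>_def drop_first_pair_def)
  moreover have "pair_with_first m p \<tau> = \<sigma>"
  proof
    fix k
    show "pair_with_first m p \<tau> k = \<sigma> k"
    proof (cases "k < m + 2")
      case True
      then show ?thesis
        by (cases k; cases "k - 1") (auto simp: parts(1,4) parts(2)[unfolded One_nat_def])
    next
      case False
      then have "pair_with_first m p \<tau> k = k" "\<sigma> k = k"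
        using permutes_not_in[OF pair_with_first_permutes(1)[OF \<open>p \<le> m\<close> \<open>\<tau> permutes {0..<m}\<close>]]
          permutes_not_in[OF perm] by auto
      then show ?thesis by simp
    qed
  qed
  ultimately show "canonical_pairing m \<tau>" "pair_with_first m p \<tau> = \<sigma>"
    using canonical_pairing_pair_with_first_iff[OF \<open>p \<le> m\<close>] \<sigma> by auto
qed

lemma pfaffian_0 [simp]: "pfaffian 0 F = 1"
proof -
  have "{\<sigma>. canonical_pairing 0 \<sigma>} = {id}"
    by (auto simp: canonical_pairing_def permutes_empty)
  then show ?thesis by (simp add: pfaffian_def)
qed

lemma sum_canonical_pairing_Suc_Suc:
  "(\<Sum>\<sigma> | canonical_pairing (Suc (Suc m)) \<sigma>. g \<sigma>) =
     (\<Sum>p<Suc m. \<Sum>\<tau> | canonical_pairing m \<tau>. g (pair_with_first m p \<tau>))"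
  unfolding sum.cartesian_product
proof (rule sum.reindex_bij_witness[where i = "\<lambda>(p, \<tau>). pair_with_first m p \<tau>"
      and j = "\<lambda>\<sigma>. (\<sigma> 1 - 1, drop_first_pair m \<sigma>)"])
  fix \<sigma> assume "\<sigma> \<in> {\<sigma>. canonical_pairing (Suc (Suc m)) \<sigma>}"
  then have "canonical_pairing (Suc (Suc m)) \<sigma>" by simp
  note dec = canonical_pairing_decompose[OF this]
  show "(\<sigma> 1 - 1, drop_first_pair m \<sigma>) \<in> {..<Suc m} \<times> {\<tau>. canonical_pairing m \<tau>}"
    using dec(1,2) by simp
  show "(case (\<sigma> 1 - 1, drop_first_pair m \<sigma>) of (p, \<tau>) \<Rightarrow> pair_with_first m p \<tau>) = \<sigma>"
    using dec(3) by simp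
  then show "(case (\<sigma> 1 - 1, drop_first_pair m \<sigma>) of (p, \<tau>) \<Rightarrow> g (pair_with_first m p \<tau>)) = g \<sigma>"
    by simp
next
  fix p\<tau> assume "p\<tau> \<in> {..<Suc m} \<times> {\<tau>. canonical_pairing m \<tau>}"
  then obtain p \<tau> where p\<tau>: "p\<tau> = (p, \<tau>)" "p \<le> m" "canonical_pairing m \<tau>" by auto
  then show "(case p\<tau> of (p, \<tau>) \<Rightarrow> pair_with_first m p \<tau>) \<in> {\<sigma>. canonical_pairing (Suc (Suc m)) \<sigma>}"
    using canonical_pairing_pair_with_first_iff canonical_pairing_permutes by simp
  show "((case p\<tau> of (p, \<tau>) \<Rightarrow> pair_with_first m p \<tau>) 1 - 1,
         drop_first_pair m (case p\<tau> of (p, \<tau>) \<Rightarrow> pair_with_first m p \<tau>)) = p\<tau>"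
    using p\<tau> drop_first_pair_pair_with_first canonical_pairing_permutes by simp
qed

lemma pfaffian_expand_first_row:
  "pfaffian (Suc (Suc m)) F =
     (\<Sum>p<Suc m. (-1)^p * F 0 (Suc p) * pfaffian m (\<lambda>u v. F (Suc (skip p u)) (Suc (skip p v))))"
  unfolding pfaffian_def sum_canonical_pairing_Suc_Suc sum_distrib_left
proof (intro sum.cong refl)
  let ?G = "\<lambda>p u v. F (Suc (skip p u)) (Suc (skip p v))"
  fix p \<tau> assume "p \<in> {..<Suc m}" "\<tau> \<in> {\<tau>. canonical_pairing m \<tau>}"
  then have p: "p \<le> m" and \<tau>: "canonical_pairing m \<tau>" by auto
  have "(\<Prod>k<Suc (m div 2). F (pair_with_first m p \<tau> (2*k)) (pair_with_first m p \<tau> (2*k+1))) =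
      F 0 (Suc p) * (\<Prod>k<m div 2. ?G p (\<tau> (2*k)) (\<tau> (2*k+1)))"
    unfolding prod.lessThan_Suc_shift by (intro arg_cong2[where f = "(*)"] prod.cong) auto
  then show "of_int (sign (pair_with_first m p \<tau>)) *
      (\<Prod>k<Suc (Suc m) div 2. F (pair_with_first m p \<tau> (2*k)) (pair_with_first m p \<tau> (2*k+1))) =
    (-1)^p * F 0 (Suc p) * (of_int (sign \<tau>) * (\<Prod>k<m div 2. ?G p (\<tau> (2*k)) (\<tau> (2*k+1))))"
    using pair_with_first_permutes(2)[OF p canonical_pairing_permutes[OF \<tau>]] by simp
qed

lemma pfaffian_eq_0_if_first_rows_eq:
  fixes F :: "nat \<Rightarrow> nat \<Rightarrow> 'a::comm_ring_1"
  assumes "even m" and rows: "F 1 = F 0" and "F 0 1 = 0"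
  shows "pfaffian (Suc (Suc m)) F = 0"
proof (cases "m = 0")
  case True
  then show ?thesis using assms(3) by (simp add: pfaffian_expand_first_row)
next
  case False
  define n where "n = m - 2"
  have m: "m = Suc (Suc n)" using False \<open>even m\<close> unfolding n_def by (cases m) auto
  let ?H = "\<lambda>p q u v. F (Suc (skip (Suc p) (Suc (skip q u)))) (Suc (skip (Suc p) (Suc (skip q v))))"
  define T where "T p q = (-1)^(Suc p + q) * F 0 (Suc (Suc p)) *
      F 0 (Suc (skip (Suc p) (Suc q))) * pfaffian n (?H p q)" for p q
  have "pfaffian (Suc (Suc m)) F =
      (\<Sum>p<Suc m. (-1)^p * F 0 (Suc p) * pfaffian m (\<lambda>u v. F (Suc (skip p u)) (Suc (skip p v))))"
    by (rule pfaffian_expand_first_row)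
  also have "\<dots> = (\<Sum>p<Suc (Suc n). (-1)^Suc p * F 0 (Suc (Suc p)) *
      pfaffian (Suc (Suc n)) (\<lambda>u v. F (Suc (skip (Suc p) u)) (Suc (skip (Suc p) v))))"
    unfolding m sum.lessThan_Suc_shift using assms(3) by simp
  also have "\<dots> = (\<Sum>(p, q) \<in> {..<Suc (Suc n)} \<times> {..<Suc n}. T p q)"
    unfolding sum.cartesian_product[symmetric] pfaffian_expand_first_row sum_distrib_left
    by (intro sum.cong refl) (simp add: T_def skip_def rows[unfolded One_nat_def] power_add mult_ac)
  also have "\<dots> = 0"
  proof (rule sum_involution_eq_0)
    \<comment> \<open>exchange the partners of rows 0 and 1\<close>
    let ?\<iota> = "\<lambda>(p, q). if q < p then (q, p - 1) else (Suc q, p :: nat)"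
    fix pq assume pq: "pq \<in> {..<Suc (Suc n)} \<times> {..<Suc n}"
    then obtain p q where [simp]: "pq = (p, q)" and "p < Suc (Suc n)" "q < Suc n" by auto
    show "?\<iota> pq \<in> {..<Suc (Suc n)} \<times> {..<Suc n}" "?\<iota> (?\<iota> pq) = pq" "?\<iota> pq \<noteq> pq"
      using pq by auto
    show "(case ?\<iota> pq of (p, q) \<Rightarrow> T p q) + (case pq of (p, q) \<Rightarrow> T p q) = 0"
    proof (cases "q < p")
      case True
      have "?H q (p - 1) = ?H p q" using True by (auto simp: fun_eq_iff skip_def)
      moreover have "(-1::'a)^(q + p - 1) = - ((-1)^(p + q))"
        using True by (cases p) (auto simp: add.commute)
      moreover have "skip (Suc q) (Suc (p - 1)) = Suc p" "skip (Suc p) (Suc q) = Suc q"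
        using True by (auto simp: skip_def)
      ultimately show ?thesis using True by (simp add: T_def mult_ac)
    next
      case False
      have "?H (Suc q) p = ?H p q" using False by (auto simp: fun_eq_iff skip_def)
      moreover have "skip (Suc (Suc q)) (Suc p) = Suc p" "skip (Suc p) (Suc q) = Suc (Suc q)"
        using False by (auto simp: skip_def)
      ultimately show ?thesis using False by (simp add: T_def mult_ac add.commute)
    qed
  qed
  finally show ?thesis .
qed

section \<open>Products over pairs\<close>

definition prod_pairs :: "nat \<Rightarrow> (nat \<Rightarrow> nat \<Rightarrow> 'a::comm_monoid_mult) \<Rightarrow> 'a" where
  "prod_pairs n G = (\<Prod>i<n. \<Prod>j\<in>{i<..<n}. G i j)"

lemma prod_pairs_cong:
  "(\<And>i j. i < j \<Longrightarrow> j < n \<Longrightarrow> G i j = H i j) \<Longrightarrow> prod_pairs n G = prod_pairs n H"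
  unfolding prod_pairs_def by (intro prod.cong refl) auto

lemma prod_pairs_Suc: "prod_pairs (Suc n) G = prod_pairs n G * (\<Prod>i<n. G i n)"
proof -
  have "(\<Prod>j\<in>{i<..<Suc n}. G i j) = (\<Prod>j\<in>{i<..<n}. G i j) * G i n" if "i < n" for i
  proof -
    have "{i<..<Suc n} = insert n {i<..<n}" using that by auto
    then show ?thesis by (simp add: mult.commute)
  qed
  moreover have "{n<..<Suc n} = {}" by auto
  ultimately show ?thesis by (simp add: prod_pairs_def prod.distrib)
qed

lemma prod_lessThan_Suc_skip:
  fixes g :: "nat \<Rightarrow> 'a::comm_monoid_mult"
  assumes "p \<le> n"
  shows "(\<Prod>l<Suc n. g l) = g p * (\<Prod>l<n. g (skip p l))"
proof -
  have "bij_betw (skip p) {..<n} ({..<Suc n} - {p})"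
    using assms
    by (intro bij_betwI[where g = "unskip p"]) (auto simp: skip_def unskip_def split: if_splits)
  then have "(\<Prod>l<n. g (skip p l)) = (\<Prod>l\<in>{..<Suc n} - {p}. g l)"
    by (rule prod.reindex_bij_betw)
  moreover have "(\<Prod>l<Suc n. g l) = g p * (\<Prod>l\<in>{..<Suc n} - {p}. g l)"
    using assms by (intro prod.remove) auto
  ultimately show ?thesis by simp
qed

lemma prod_pairs_remove:
  fixes G :: "nat \<Rightarrow> nat \<Rightarrow> 'a::comm_ring_1"
  assumes antisym: "\<And>i j. G j i = - G i j" and "p \<le> n"
  shows "prod_pairs (Suc n) G =
    (-1)^p * (\<Prod>l<n. G p (skip p l)) * prod_pairs n (\<lambda>i j. G (skip p i) (skip p j))"
  using \<open>p \<le> n\<close>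
proof (induction n rule: dec_induct)
  case base
  have "prod_pairs p (\<lambda>i j. G (skip p i) (skip p j)) = prod_pairs p G"
    by (rule prod_pairs_cong) (simp add: skip_def)
  moreover have "(\<Prod>i<p. G i p) = (-1)^p * (\<Prod>l<p. G p (skip p l))"
    by (simp add: antisym[of _ p] prod_uminus skip_def)
  ultimately show ?case by (simp add: prod_pairs_Suc mult_ac)
next
  case (step n)
  have "(\<Prod>i<Suc n. G i (Suc n)) = G p (Suc n) * (\<Prod>i<n. G (skip p i) (skip p n))"
    using step.hyps prod_lessThan_Suc_skip[of p n "\<lambda>i. G i (Suc n)"] by (simp add: skip_def)
  moreover have "(\<Prod>l<Suc n. G p (skip p l)) = (\<Prod>l<n. G p (skip p l)) * G p (Suc n)"
    using step.hyps by (simp add: skip_def)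
  ultimately show ?case
    using step.IH by (simp add: prod_pairs_Suc[of "Suc n"] prod_pairs_Suc[of n] mult_ac)
qed

section \<open>The identity for generic points\<close>

definition qform :: "'a::comm_ring_1 \<Rightarrow> 'a \<Rightarrow> 'a \<Rightarrow> 'a \<Rightarrow> 'a \<Rightarrow> 'a" where
  "qform a b c u v = c + b*(u + v) + a*u*v"

definition qratio :: "'a::field \<Rightarrow> 'a \<Rightarrow> 'a \<Rightarrow> 'a \<Rightarrow> 'a \<Rightarrow> 'a" where
  "qratio a b c u v = (u - v) / qform a b c u v"

definition qform_root :: "'a::field \<Rightarrow> 'a \<Rightarrow> 'a \<Rightarrow> 'a \<Rightarrow> 'a" where
  "qform_root a b c y = - (c + b*y) / (b + a*y)"

lemma qform_commute: "qform a b c u v = qform a b c v u"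
  by (simp add: qform_def algebra_simps)

lemma qratio_antisym: "qratio a b c v u = - qratio a b c u v"
  by (simp add: qratio_def qform_commute[of a b c v] minus_divide_left)

lemma qratio_self [simp]: "qratio a b c u u = 0"
  by (simp add: qratio_def)

lemma poly_qform: "poly [:c + b*y, b + a*y:] t = qform a b c t y"
  by (simp add: qform_def algebra_simps)

lemma qform_qform_root: "b + a*y \<noteq> 0 \<Longrightarrow> qform a b c (qform_root a b c y) y = 0"
  by (simp add: qform_def qform_root_def field_simps)

lemma qform_mult_qform:
  "qform a b c r z * qform a b c y z =
     qform a b c r y * qform a b c z z + (b^2 - a*c) * (r - z) * (y - z)"
  by (simp add: qform_def power2_eq_square algebra_simps)

lemma qform_eq_qratio_if_qform_0:
  assumes "qform a b c r y = 0" "qform a b c y z \<noteq> 0"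
  shows "qform a b c r z = (b^2 - a*c) * (r - z) * qratio a b c y z"
  using qform_mult_qform[of a b c r z y] assms by (simp add: qratio_def field_simps)

definition admissible :: "'a::comm_ring_1 \<Rightarrow> 'a \<Rightarrow> 'a \<Rightarrow> nat \<Rightarrow> (nat \<Rightarrow> 'a) \<Rightarrow> bool" where
  "admissible a b c n x \<longleftrightarrow> (\<forall>i<n. \<forall>j<n. i \<noteq> j \<longrightarrow> qform a b c (x i) (x j) \<noteq> 0)"

definition generic :: "'a::comm_ring_1 \<Rightarrow> 'a \<Rightarrow> 'a \<Rightarrow> nat \<Rightarrow> (nat \<Rightarrow> 'a) \<Rightarrow> bool" where
  "generic a b c n x \<longleftrightarrow> inj_on x {..<n} \<and> (\<forall>i<n. b + a * x i \<noteq> 0) \<and>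
     (\<forall>i<n. \<forall>j<n. qform a b c (x i) (x j) \<noteq> 0)"

lemma qform_root_distinct:
  assumes "b^2 - a*c \<noteq> 0" "generic a b c n x" "i < n" "j < n"
  shows "qform_root a b c (x i) \<noteq> x j"
    and "qform_root a b c (x i) = qform_root a b c (x j) \<Longrightarrow> i = j"
proof -
  let ?r = "qform_root a b c (x i)"
  have root: "qform a b c ?r (x i) = 0"
    using assms(2,3) by (simp add: generic_def qform_qform_root)
  show ne: "?r \<noteq> x j"
    using root assms(2,3,4) qform_commute[of a b c "x i"] by (auto simp: generic_def)
  assume "?r = qform_root a b c (x j)"
  then have "qform a b c ?r (x j) = 0"
    using assms(2,4) by (simp add: generic_def qform_qform_root)
  then have "(b^2 - a*c) * (?r - x j) * (x i - x j) = 0"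
    using qform_mult_qform[of a b c ?r "x j" "x i"] root by simp
  then show "i = j"
    using assms ne inj_onD[of x "{..<n}" i j] by (auto simp: generic_def)
qed

definition expansion_poly ::
    "'a::field \<Rightarrow> 'a \<Rightarrow> 'a \<Rightarrow> nat \<Rightarrow> (nat \<Rightarrow> 'a) \<Rightarrow> (nat \<Rightarrow> 'a) \<Rightarrow> 'a \<Rightarrow> 'a poly" where
  "expansion_poly a b c m y D C =
     (\<Sum>p<Suc m. smult ((-1)^p * D p)
        ([:- y p, 1:] * (\<Prod>l<m. [:c + b * y (skip p l), b + a * y (skip p l):])))
     - smult C (\<Prod>l<Suc m. [:- y l, 1:])"

lemma poly_expansion_poly:
  "poly (expansion_poly a b c m y D C) t =
     (\<Sum>p<Suc m. (-1)^p * D p * ((t - y p) * (\<Prod>l<m. qform a b c t (y (skip p l)))))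
     - C * (\<Prod>l<Suc m. t - y l)"
proof -
  have lin: "poly [:- z, 1:] t = t - z" for z by simp
  show ?thesis
    unfolding expansion_poly_def poly_diff poly_sum poly_smult poly_mult poly_prod poly_qform lin
    by (rule refl)
qed

lemma poly_expansion_poly_eq:
  assumes "\<And>l. l \<le> m \<Longrightarrow> qform a b c t (y l) \<noteq> 0"
  shows "poly (expansion_poly a b c m y D C) t =
    ((\<Sum>p<Suc m. (-1)^p * qratio a b c t (y p) * D p) - (\<Prod>l<Suc m. qratio a b c t (y l)) * C)
    * (\<Prod>l<Suc m. qform a b c t (y l))"
proof -
  let ?Q = "qform a b c t" and ?f = "qratio a b c t"
  have "?f (y p) * (\<Prod>l<Suc m. ?Q (y l)) = (t - y p) * (\<Prod>l<m. ?Q (y (skip p l)))" if "p \<le> m" for p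
    using prod_lessThan_Suc_skip[OF that, of "\<lambda>l. ?Q (y l)"] assms[OF that]
    by (simp add: qratio_def)
  moreover have "(\<Prod>l<Suc m. ?f (y l)) * (\<Prod>l<Suc m. ?Q (y l)) = (\<Prod>l<Suc m. t - y l)"
    unfolding prod.distrib[symmetric] using assms by (intro prod.cong) (auto simp: qratio_def)
  ultimately show ?thesis
    unfolding poly_expansion_poly left_diff_distrib sum_distrib_right by (simp add: mult_ac)
qed

lemma degree_prod_linear_le: "degree (\<Prod>l<m. [:u l, v l:]) \<le> m"
proof -
  have "degree (\<Prod>l<m. [:u l, v l:]) \<le> (\<Sum>l<m. degree [:u l, v l:])"
    using degree_prod_sum_le[of "{..<m}" "\<lambda>l. [:u l, v l:]"] by (simp add: o_def)
  also have "\<dots> \<le> (\<Sum>l<m. 1)" by (intro sum_mono) simp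
  finally show ?thesis by simp
qed

lemma degree_expansion_poly: "degree (expansion_poly a b c m y D C) \<le> Suc m"
  unfolding expansion_poly_def
proof (intro degree_diff_le degree_sum_le)
  fix p
  have "degree ([:- y p, 1:] * (\<Prod>l<m. [:c + b * y (skip p l), b + a * y (skip p l):])) \<le> 1 + m"
    by (rule order.trans[OF degree_mult_le add_mono]) (simp_all add: degree_prod_linear_le)
  then show "degree (smult ((-1)^p * D p)
      ([:- y p, 1:] * (\<Prod>l<m. [:c + b * y (skip p l), b + a * y (skip p l):]))) \<le> Suc m"
    using degree_smult_le[of "(-1)^p * D p"] by (simp add: le_trans)
next
  show "degree (smult C (\<Prod>l<Suc m. [:- y l, 1:])) \<le> Suc m"
    using degree_smult_le[of C] degree_prod_linear_le[of "\<lambda>l. - y l" "\<lambda>_. 1" "Suc m"] le_trans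
    by blast
qed simp

lemma poly_expansion_poly_qform_root:
  assumes eps: "(b^2 - a*c)^m = 1" and gen: "generic a b c (Suc m) y" and "k \<le> m"
    and C: "C = (-1)^k * (\<Prod>l<m. qratio a b c (y k) (y (skip k l))) * D k"
  shows "poly (expansion_poly a b c m y D C) (qform_root a b c (y k)) = 0"
proof -
  let ?Q = "qform a b c" and ?r = "qform_root a b c (y k)"
  have Qr: "?Q ?r (y k) = 0"
    using gen \<open>k \<le> m\<close> by (simp add: generic_def qform_qform_root)
  have others: "(\<Prod>l<m. ?Q ?r (y (skip p l))) = 0" if "p \<le> m" "p \<noteq> k" for p
  proof (rule prod_zero)
    have "skip p (unskip p k) = k" "unskip p k < m"
      using \<open>k \<le> m\<close> that by (auto simp: skip_def unskip_def)
    then show "\<exists>l\<in>{..<m}. ?Q ?r (y (skip p l)) = 0"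
      using Qr by (intro bexI[of _ "unskip p k"]) simp_all
  qed simp
  have "(\<Prod>l<m. ?Q ?r (y (skip k l))) =
      (\<Prod>l<m. (b^2 - a*c) * (?r - y (skip k l)) * qratio a b c (y k) (y (skip k l)))"
  proof (intro prod.cong refl qform_eq_qratio_if_qform_0[OF Qr])
    fix l assume "l \<in> {..<m}"
    then show "?Q (y k) (y (skip k l)) \<noteq> 0"
      using gen \<open>k \<le> m\<close> by (simp add: generic_def skip_def)
  qed
  also have "\<dots> = (\<Prod>l<m. ?r - y (skip k l)) * (\<Prod>l<m. qratio a b c (y k) (y (skip k l)))"
    using eps by (simp add: prod.distrib)
  finally have "(-1)^k * D k * ((?r - y k) * (\<Prod>l<m. ?Q ?r (y (skip k l)))) =
      C * (\<Prod>l<Suc m. ?r - y l)"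
    using C prod_lessThan_Suc_skip[OF \<open>k \<le> m\<close>, of "\<lambda>l. ?r - y l"] by (simp add: mult_ac)
  moreover have "(\<Sum>p<Suc m. (-1)^p * D p * ((?r - y p) * (\<Prod>l<m. ?Q ?r (y (skip p l))))) =
      (-1)^k * D k * ((?r - y k) * (\<Prod>l<m. ?Q ?r (y (skip k l))))"
    using \<open>k \<le> m\<close>
    by (subst sum.remove[of _ k]) (auto intro!: sum.neutral simp: others less_Suc_eq_le)
  ultimately show ?thesis by (simp add: poly_expansion_poly)
qed

lemma qratio_interpolation:
  fixes y D :: "nat \<Rightarrow> 'a::field" and C :: 'a
  assumes eps: "(b^2 - a*c)^2 = 1" and "even m"
    and gen: "generic a b c (Suc m) y"
    and C: "\<And>p. p \<le> m \<Longrightarrow> C = (-1)^p * (\<Prod>l<m. qratio a b c (y p) (y (skip p l))) * D p"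
    and at_y0: "(\<Sum>p<Suc m. (-1)^p * qratio a b c (y 0) (y p) * D p) = 0"
    and t: "\<And>l. l \<le> m \<Longrightarrow> qform a b c t (y l) \<noteq> 0"
  shows "(\<Sum>p<Suc m. (-1)^p * qratio a b c t (y p) * D p) = (\<Prod>l<Suc m. qratio a b c t (y l)) * C"
proof -
  let ?P = "expansion_poly a b c m y D C" and ?r = "\<lambda>k. qform_root a b c (y k)"
  have eps_m: "(b^2 - a*c)^m = 1" using eps \<open>even m\<close> by (auto simp: power_mult elim!: evenE)
  have roots: "poly ?P (?r k) = 0" if "k \<le> m" for k
    using poly_expansion_poly_qform_root[where D = D, OF eps_m gen that C[OF that]] .
  have R_y0: "(\<Prod>l<Suc m. qratio a b c (y 0) (y l)) = 0"
    by (intro prod_zero bexI[of _ 0]) simp_all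
  have "qform a b c (y 0) (y l) \<noteq> 0" if "l \<le> m" for l
    using gen that by (simp add: generic_def)
  then have "poly ?P (y 0) = 0"
    using poly_expansion_poly_eq[where m = m and y = y and t = "y 0" and D = D and C = C] at_y0 R_y0
    by simp
  have "?P = 0"
  proof (rule poly_eqI_degree)
    let ?roots = "insert (y 0) (?r ` {..m})"
    have "b^2 - a*c \<noteq> 0" using eps by auto
    note distinct = qform_root_distinct[OF this gen, unfolded less_Suc_eq_le]
    have "inj_on ?r {..m}" by (rule inj_onI) (use distinct(2) in auto)
    moreover have "y 0 \<notin> ?r ` {..m}" using distinct(1) by force
    ultimately have "card ?roots = Suc (Suc m)" by (simp add: card_image)
    then show "degree ?P < card ?roots" "degree 0 < card ?roots"
      using degree_expansion_poly[of a b c m y D C] by simp_all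
    show "poly ?P s = poly 0 s" if "s \<in> ?roots" for s
      using that roots \<open>poly ?P (y 0) = 0\<close> by auto
  qed
  moreover have "(\<Prod>l<Suc m. qform a b c t (y l)) \<noteq> 0"
    using t by simp
  ultimately show ?thesis
    using poly_expansion_poly_eq[where m = m and y = y and t = t and D = D and C = C, OF t] by simp
qed

lemma pfaffian_qratio_step:
  fixes x :: "nat \<Rightarrow> 'a::field"
  assumes eps: "(b^2 - a*c)^2 = 1" and "even m"
    and IH: "\<And>y. admissible a b c m y \<Longrightarrow>
      pfaffian m (\<lambda>i j. qratio a b c (y i) (y j)) = prod_pairs m (\<lambda>i j. qratio a b c (y i) (y j))"
    and gen: "generic a b c (Suc (Suc m)) x"
  shows "pfaffian (Suc (Suc m)) (\<lambda>i j. qratio a b c (x i) (x j)) =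
    prod_pairs (Suc (Suc m)) (\<lambda>i j. qratio a b c (x i) (x j))"
proof -
  let ?f = "qratio a b c"
  define y where "y l = x (Suc l)" for l
  define D where "D p = prod_pairs m (\<lambda>i j. ?f (y (skip p i)) (y (skip p j)))" for p
  define C where "C = prod_pairs (Suc m) (\<lambda>i j. ?f (y i) (y j))"
  have expand: "pfaffian (Suc (Suc m)) (\<lambda>i j. ?f ((x(0 := t)) i) ((x(0 := t)) j)) =
      (\<Sum>p<Suc m. (-1)^p * ?f t (y p) * D p)" for t
  proof -
    have "pfaffian m (\<lambda>u v. ?f (y (skip p u)) (y (skip p v))) = D p" if "p \<le> m" for p
    proof -
      have "admissible a b c m (\<lambda>u. y (skip p u))"
        using gen that by (auto simp: admissible_def generic_def y_def skip_def)
      then show ?thesis unfolding D_def by (rule IH)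
    qed
    then show ?thesis
      unfolding pfaffian_expand_first_row by (intro sum.cong refl) (simp add: y_def)
  qed
  have C_eq: "C = (-1)^p * (\<Prod>l<m. ?f (y p) (y (skip p l))) * D p" if "p \<le> m" for p
    unfolding C_def D_def by (rule prod_pairs_remove[OF qratio_antisym that])
  have "pfaffian (Suc (Suc m)) (\<lambda>i j. ?f ((x(0 := y 0)) i) ((x(0 := y 0)) j)) = 0"
    by (rule pfaffian_eq_0_if_first_rows_eq[OF \<open>even m\<close>]) (simp_all add: y_def fun_eq_iff)
  then have at_y0: "(\<Sum>p<Suc m. (-1)^p * ?f (y 0) (y p) * D p) = 0"
    unfolding expand .
  have gen_y: "generic a b c (Suc m) y"
    using gen by (auto simp: generic_def y_def inj_on_def)
  have "pfaffian (Suc (Suc m)) (\<lambda>i j. ?f (x i) (x j)) = (\<Sum>p<Suc m. (-1)^p * ?f (x 0) (y p) * D p)"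
    using expand[of "x 0"] by simp
  also have "\<dots> = (\<Prod>l<Suc m. ?f (x 0) (y l)) * C"
    using gen by (intro qratio_interpolation[OF eps \<open>even m\<close> gen_y C_eq at_y0])
      (simp_all add: generic_def y_def)
  also have "\<dots> = prod_pairs (Suc (Suc m)) (\<lambda>i j. ?f (x i) (x j))"
    unfolding prod_pairs_remove[OF qratio_antisym le0] C_def by (simp add: y_def)
  finally show ?thesis .
qed

section \<open>Removing the genericity assumption\<close>

lemma isCont_pfaffian:
  fixes F :: "'b::t2_space \<Rightarrow> nat \<Rightarrow> nat \<Rightarrow> 'a::real_normed_field"
  assumes "\<And>i j. i < n \<Longrightarrow> j < n \<Longrightarrow> isCont (\<lambda>s. F s i j) z"
  shows "isCont (\<lambda>s. pfaffian n (F s)) z"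
  unfolding pfaffian_def
proof (intro continuous_intros)
  fix \<sigma> k assume "\<sigma> \<in> {\<sigma>. canonical_pairing n \<sigma>}" "k \<in> {..<n div 2}"
  then have "\<sigma> (2*k) < n" "\<sigma> (2*k+1) < n"
    using permutes_in_image[OF canonical_pairing_permutes] by fastforce+
  then show "isCont (\<lambda>s. F s (\<sigma> (2*k)) (\<sigma> (2*k+1))) z" by (rule assms)
qed

lemma isCont_prod_pairs:
  fixes F :: "'b::t2_space \<Rightarrow> nat \<Rightarrow> nat \<Rightarrow> 'a::real_normed_field"
  assumes "\<And>i j. i < n \<Longrightarrow> j < n \<Longrightarrow> isCont (\<lambda>s. F s i j) z"
  shows "isCont (\<lambda>s. prod_pairs n (F s)) z"
  unfolding prod_pairs_def by (intro continuous_intros assms) auto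

lemma eventually_poly_nonzero:
  fixes p :: "'a::{idom,t1_space} poly"
  assumes "p \<noteq> 0"
  shows "\<forall>\<^sub>F s in at z. poly p s \<noteq> 0"
proof -
  have "\<forall>\<^sub>F s in at z. \<forall>r\<in>{r. poly p r = 0}. s \<noteq> r"
    using poly_roots_finite[OF assms]
    by (intro eventually_ball_finite) (auto intro: eventually_neq_at_within)
  then show ?thesis by (rule eventually_mono) auto
qed

lemma poly_qform_perturbed:
  "qform a b c (u + s*\<alpha>) (v + s*\<beta>) = poly [:qform a b c u v, b*(\<alpha> + \<beta>) + a*(u*\<beta> + v*\<alpha>), a*\<alpha>*\<beta>:] s"
  by (simp add: qform_def algebra_simps)

lemma eventually_qform_perturbed_nonzero:
  fixes x :: "nat \<Rightarrow> 'a::real_normed_field"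
  assumes ab: "a \<noteq> 0 \<or> b \<noteq> 0" and "i \<noteq> j \<Longrightarrow> qform a b c (x i) (x j) \<noteq> 0"
  shows "\<forall>\<^sub>F s in at 0. qform a b c (x i + s * of_nat (Suc i)) (x j + s * of_nat (Suc j)) \<noteq> 0"
proof -
  define \<alpha> :: 'a where "\<alpha> = of_nat (Suc i)"
  define \<beta> :: 'a where "\<beta> = of_nat (Suc j)"
  let ?p = "[:qform a b c (x i) (x j), b*(\<alpha> + \<beta>) + a*(x i*\<beta> + x j*\<alpha>), a*\<alpha>*\<beta>:]"
  have "?p \<noteq> 0"
  proof (cases "i = j")
    case True
    have "\<alpha> \<noteq> 0" "\<alpha> + \<alpha> \<noteq> 0"
      unfolding \<alpha>_def by (simp_all del: of_nat_Suc add: of_nat_add[symmetric])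
    then have "a * \<alpha> * \<alpha> \<noteq> 0 \<or> b * (\<alpha> + \<alpha>) + a * (x i * \<alpha> + x i * \<alpha>) \<noteq> 0"
      using ab by auto
    moreover have "\<beta> = \<alpha>" using True by (simp add: \<alpha>_def \<beta>_def)
    ultimately show ?thesis using True by auto
  qed (use assms(2) in simp)
  from eventually_poly_nonzero[OF this] show ?thesis
    by (rule eventually_mono) (simp add: poly_qform_perturbed \<alpha>_def \<beta>_def mult.commute)
qed

lemma eventually_generic_perturbation:
  fixes x :: "nat \<Rightarrow> 'a::real_normed_field"
  assumes ab: "a \<noteq> 0 \<or> b \<noteq> 0" and adm: "admissible a b c n x"
  shows "\<forall>\<^sub>F s in at 0. generic a b c n (\<lambda>i. x i + s * of_nat (Suc i))"
proof -
  let ?xs = "\<lambda>s i. x i + s * of_nat (Suc i)"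
  have inj: "\<forall>\<^sub>F s in at 0. \<forall>i\<in>{..<n}. \<forall>j\<in>{..<n}. i \<noteq> j \<longrightarrow> ?xs s i \<noteq> ?xs s j"
  proof (intro eventually_ball_finite ballI finite_lessThan)
    fix i j
    show "\<forall>\<^sub>F s in at 0. i \<noteq> j \<longrightarrow> ?xs s i \<noteq> ?xs s j"
    proof (cases "i = j")
      case False
      then have "[:x i - x j, of_nat (Suc i) - of_nat (Suc j):] \<noteq> 0" by simp
      from eventually_poly_nonzero[OF this] show ?thesis
        by (rule eventually_mono) (simp add: algebra_simps)
    qed simp
  qed
  have lin: "\<forall>\<^sub>F s in at 0. \<forall>i\<in>{..<n}. b + a * ?xs s i \<noteq> 0"
  proof (intro eventually_ball_finite ballI finite_lessThan)
    fix i
    have "[:b + a * x i, a * of_nat (Suc i):] \<noteq> 0" using ab by (auto simp del: of_nat_Suc)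
    from eventually_poly_nonzero[OF this] show "\<forall>\<^sub>F s in at 0. b + a * ?xs s i \<noteq> 0"
      by (rule eventually_mono) (simp add: algebra_simps)
  qed
  have quad: "\<forall>\<^sub>F s in at 0. \<forall>i\<in>{..<n}. \<forall>j\<in>{..<n}. qform a b c (?xs s i) (?xs s j) \<noteq> 0"
    using adm
    by (intro eventually_ball_finite ballI finite_lessThan eventually_qform_perturbed_nonzero[OF ab])
      (auto simp: admissible_def)
  show ?thesis
    using inj lin quad by eventually_elim (auto simp: generic_def inj_on_def)
qed

lemma pfaffian_qratio_of_generic:
  fixes x :: "nat \<Rightarrow> 'a::real_normed_field"
  assumes ab: "a \<noteq> 0 \<or> b \<noteq> 0" and adm: "admissible a b c n x"
    and generic_case: "\<And>x. generic a b c n x \<Longrightarrow>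
      pfaffian n (\<lambda>i j. qratio a b c (x i) (x j)) = prod_pairs n (\<lambda>i j. qratio a b c (x i) (x j))"
  shows "pfaffian n (\<lambda>i j. qratio a b c (x i) (x j)) =
    prod_pairs n (\<lambda>i j. qratio a b c (x i) (x j))"
proof -
  let ?xs = "\<lambda>s i. x i + s * of_nat (Suc i)"
  define G where "G s = pfaffian n (\<lambda>i j. qratio a b c (?xs s i) (?xs s j))
    - prod_pairs n (\<lambda>i j. qratio a b c (?xs s i) (?xs s j))" for s
  have entries: "isCont (\<lambda>s. qratio a b c (?xs s i) (?xs s j)) 0" if "i < n" "j < n" for i j
  proof (cases "i = j")
    case False
    then have "qform a b c (?xs 0 i) (?xs 0 j) \<noteq> 0" using adm that by (simp add: admissible_def)
    then show ?thesis unfolding qratio_def qform_def by (intro continuous_intros) auto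
  qed simp
  have "isCont G 0"
    unfolding G_def by (intro continuous_intros isCont_pfaffian isCont_prod_pairs entries)
  then have "G \<midarrow>0\<rightarrow> G 0" by (simp add: isCont_def)
  moreover have "\<forall>\<^sub>F s in at 0. G s = 0"
    using eventually_generic_perturbation[OF ab adm]
    by (rule eventually_mono) (simp add: G_def generic_case)
  then have "G \<midarrow>0\<rightarrow> 0" by (rule tendsto_eventually)
  ultimately have "G 0 = 0" by (rule LIM_unique)
  then show ?thesis by (simp add: G_def)
qed

lemma pfaffian_qratio:
  fixes x :: "nat \<Rightarrow> 'a::real_normed_field"
  assumes eps: "(b^2 - a*c)^2 = 1" and "even n" and "admissible a b c n x"
  shows "pfaffian n (\<lambda>i j. qratio a b c (x i) (x j)) =
    prod_pairs n (\<lambda>i j. qratio a b c (x i) (x j))"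
proof -
  obtain q where "n = 2*q" using \<open>even n\<close> by blast
  have ab: "a \<noteq> 0 \<or> b \<noteq> 0" using eps by auto
  have "admissible a b c (2*q) x \<Longrightarrow>
      pfaffian (2*q) (\<lambda>i j. qratio a b c (x i) (x j)) =
        prod_pairs (2*q) (\<lambda>i j. qratio a b c (x i) (x j))"
    for x
  proof (induction q arbitrary: x)
    case 0
    then show ?case by (simp add: prod_pairs_def)
  next
    case (Suc q)
    have "pfaffian (Suc (Suc (2*q))) (\<lambda>i j. qratio a b c (y i) (y j)) =
        prod_pairs (Suc (Suc (2*q))) (\<lambda>i j. qratio a b c (y i) (y j))"
      if "generic a b c (Suc (Suc (2*q))) y" for y
      by (rule pfaffian_qratio_step[OF eps _ Suc.IH that]) simp
    then show ?case using pfaffian_qratio_of_generic[OF ab] Suc.prems by simp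
  qed
  then show ?thesis using \<open>n = 2*q\<close> assms(3) by simp
qed

theorem mainTheorem11:
  fixes a b c :: complex and n :: nat and x :: "nat \<Rightarrow> complex"
  assumes "b^2 = a*c + 1 \<or> b^2 = a*c - 1"
    and "even n"
    and "\<forall>i<n. \<forall>j<n. i \<noteq> j \<longrightarrow> c + b*(x i + x j) + a*x i*x j \<noteq> 0"
  shows "pfaffian n (\<lambda>i j. (x i - x j) / (c + b*(x i + x j) + a*x i*x j)) =
         (\<Prod>i<n. \<Prod>j\<in>{i<..<n}. (x i - x j) / (c + b*(x i + x j) + a*x i*x j))"
proof -
  have "(b^2 - a*c)^2 = 1" using assms(1) by auto
  moreover have "admissible a b c n x" using assms(3) by (simp add: admissible_def qform_def)
  ultimately show ?thesis
    using pfaffian_qratio[OF _ \<open>even n\<close>] by (simp add: qratio_def qform_def prod_pairs_def)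
qed

end
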